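(* Let $F$ be a finite field with $q$ elements and $G$ a finite abelian group of order $m$. Let $r\in(0,1)$ and $\delta\in(0,1-q^{-1})$. For each positive integer $n$ put $k=[rn]$ (the integer nearest to $rn$), let $A$ be chosen uniformly at random from $(FG)^{k\times n}$, and let $$\hat{\mathcal N}_{C_A}(\delta)=\big|\{\mathbf{b}\in(FG)^k \mid 1\le \mathrm{w}(\mathbf{b}A)\le mn\delta\}\big|.$$ Then $$\lim_{n\to\infty}\mathrm{E}\big(\hat{\mathcal N}_{C_A}(\delta)\big)=\begin{cases}0,& r<g_q(\delta),\\ \infty,& r>g_q(\delta),\end{cases}$$ and both limits converge exponentially.
   Context: $FG$ is the group algebra. Each element $\sum_{z\in G}a_z z$ of $FG$ is identified with the word $(a_z)_{z\in G}\in F^m$, and elements of $(FG)^n$ with concatenated words of length $mn$; $\mathrm{w}$ denotes Hamming weight. For $\mathbf{b}=(b_1,\dots,b_k)\in(FG)^k$ and $A=(a_{ij})$, $\mathbf{b}A=(\sum_i b_ia_{i1},\dots,\sum_i b_ia_{in})\in(FG)^n$. The $q$-ary entropy is $h_q(x)=x\log_q(q-1)-x\log_q x-(1-x)\log_q(1-x)$ (with $0\log_q0=0$) and $g_q(x)=1-h_q(x)$. *)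

theory Defs
  imports "HOL-Analysis.Analysis"
begin

text \<open>An element of the group algebra FG is a
function G \<Rightarrow> F (its coefficient vector); multiplication is convolution.\<close>

definition gconv :: "('g::{finite,ab_group_add} \<Rightarrow> 'f::{finite,field}) \<Rightarrow> ('g \<Rightarrow> 'f) \<Rightarrow> ('g \<Rightarrow> 'f)" where
  "gconv a b = (\<lambda>z. \<Sum>x\<in>UNIV. a x * b (z - x))"

text \<open>Vectors in (FG)^k are functions nat \<Rightarrow> FG vanishing from index k on; k\<times>n matrices are
functions nat \<Rightarrow> nat \<Rightarrow> FG vanishing outside {..<k}\<times>{..<n}.\<close>

definition gvecs :: "nat \<Rightarrow> (nat \<Rightarrow> 'g \<Rightarrow> 'f::zero) set" where
  "gvecs k = {b. \<forall>i. k \<le> i \<longrightarrow> b i = (\<lambda>_. 0)}"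

definition gmats :: "nat \<Rightarrow> nat \<Rightarrow> (nat \<Rightarrow> nat \<Rightarrow> 'g \<Rightarrow> 'f::zero) set" where
  "gmats k n = {A. \<forall>i j. (k \<le> i \<or> n \<le> j) \<longrightarrow> A i j = (\<lambda>_. 0)}"

definition vecmat :: "nat \<Rightarrow> nat \<Rightarrow> (nat \<Rightarrow> 'g::{finite,ab_group_add} \<Rightarrow> 'f::{finite,field})
     \<Rightarrow> (nat \<Rightarrow> nat \<Rightarrow> 'g \<Rightarrow> 'f) \<Rightarrow> (nat \<Rightarrow> 'g \<Rightarrow> 'f)" where
  "vecmat k n b A = (\<lambda>j. if j < n then (\<lambda>z. \<Sum>i<k. gconv (b i) (A i j) z) else (\<lambda>_. 0))"

text \<open>Hamming weight of an element of (FG)^n viewed as a word of length mn over F.\<close>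
definition hweight :: "nat \<Rightarrow> (nat \<Rightarrow> 'g::finite \<Rightarrow> 'f::zero) \<Rightarrow> nat" where
  "hweight n v = (\<Sum>j<n. card {z. v j z \<noteq> 0})"

definition Nhat :: "nat \<Rightarrow> nat \<Rightarrow> real \<Rightarrow> (nat \<Rightarrow> nat \<Rightarrow> 'g::{finite,ab_group_add} \<Rightarrow> 'f::{finite,field}) \<Rightarrow> nat" where
  "Nhat k n \<delta> A = card {b \<in> gvecs k. 1 \<le> hweight n (vecmat k n b A)
        \<and> real (hweight n (vecmat k n b A)) \<le> real CARD('g) * real n * \<delta>}"

definition ENhat :: "('g::{finite,ab_group_add} \<Rightarrow> 'f::{finite,field}) itself \<Rightarrow> nat \<Rightarrow> nat \<Rightarrow> real \<Rightarrow> real" where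
  "ENhat _ k n \<delta> = (\<Sum>A\<in>(gmats k n :: (nat \<Rightarrow> nat \<Rightarrow> 'g \<Rightarrow> 'f) set). real (Nhat k n \<delta> A))
                      / real (card (gmats k n :: (nat \<Rightarrow> nat \<Rightarrow> 'g \<Rightarrow> 'f) set))"

definition qentropy :: "real \<Rightarrow> real \<Rightarrow> real" where
  "qentropy q x = x * log q (q - 1)
     - (if x = 0 then 0 else x * log q x) - (if x = 1 then 0 else (1 - x) * log q (1 - x))"

definition gq :: "real \<Rightarrow> real \<Rightarrow> real" where
  "gq q x = 1 - qentropy q x"

end

(*
  By linearity of expectation, E = sum over b of P_A(1 <= w(bA) <= mn delta), and for fixed b the
  vector bA is uniformly distributed on I^n, where I is the ideal of FG generated by the entries
  of b (the map A |-> bA is a group homomorphism onto I^n).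

  Upper bound: an ideal I is a translation-invariant F-subspace of FG, so it has an information
  set J with |I| = q^|J|.  A word of I^n of weight at most mn delta has relative weight at most
  delta on the coordinates {..<n} x (J + g) for some translate J + g (averaging over g), and
  these coordinates determine the word, so the Chernoff bound leaves at most m |I|^(n h_q(delta))
  such words.  Since at most |I|^k messages generate I, E <= C 2^(k - n(1 - h_q(delta))), which
  decays exponentially when r < g_q(delta).

  Lower bound: the q^(m(k-1)) messages with b_0 = 1 generate all of FG, and a uniform word of
  (FG)^n has weight exactly t = floor(mn delta) with probability at least
  q^(mn h_q(t/mn) - mn) / (mn + 1); as t/mn -> delta this grows exponentially when r > g_q(delta).
*)

theory Submission
  imports Defs "HOL-Library.Function_Algebras" "HOL-Real_Asymp.Real_Asymp"
begin

section \<open>Counting words by Hamming weight\<close>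

definition words_on :: "'a set \<Rightarrow> ('a \<Rightarrow> 'f::zero) set" where
  "words_on D = {f. \<forall>x. x \<notin> D \<longrightarrow> f x = 0}"

definition hamming_wt :: "'a set \<Rightarrow> ('a \<Rightarrow> 'f::zero) \<Rightarrow> nat" where
  "hamming_wt D f = card {x\<in>D. f x \<noteq> 0}"

lemma finite_words_on:
  assumes "finite D"
  shows "finite (words_on D :: ('a \<Rightarrow> 'f::{zero,finite}) set)"
proof -
  have "words_on D = {f::'a \<Rightarrow> 'f. \<forall>x. (x \<in> D \<longrightarrow> f x \<in> UNIV) \<and> (x \<notin> D \<longrightarrow> f x = 0)}"
    unfolding words_on_def by auto
  moreover have "finite {f::'a \<Rightarrow> 'f. \<forall>x. (x \<in> D \<longrightarrow> f x \<in> UNIV) \<and> (x \<notin> D \<longrightarrow> f x = 0)}"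
    using assms by (intro finite_set_of_finite_funs) simp_all
  ultimately show ?thesis by simp
qed

lemma words_on_empty: "words_on {} = {\<lambda>_. 0}"
  unfolding words_on_def by auto

lemma words_on_insert:
  assumes "a \<notin> D"
  shows "words_on (insert a D) = (\<lambda>(v, g). g(a := v)) ` (UNIV \<times> words_on D)"
proof (intro equalityI subsetI)
  fix f assume "f \<in> words_on (insert a D)"
  then have "f = (\<lambda>(v, g). g(a := v)) (f a, f(a := 0))" "(f a, f(a := 0)) \<in> UNIV \<times> words_on D"
    unfolding words_on_def by auto
  then show "f \<in> (\<lambda>(v, g). g(a := v)) ` (UNIV \<times> words_on D)" by blast
qed (auto simp: words_on_def)

lemma sum_words_on_insert:
  assumes "a \<notin> D"
  shows "(\<Sum>f\<in>words_on (insert a D). \<phi> f) = (\<Sum>v\<in>(UNIV::'f::{zero,finite} set). \<Sum>g\<in>words_on D. \<phi> (g(a := v)))"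
proof -
  have "inj_on (\<lambda>(v, g). g(a := v)) (UNIV \<times> (words_on D :: ('a \<Rightarrow> 'f) set))"
    using assms unfolding inj_on_def words_on_def by (auto simp: fun_eq_iff)
  then have "(\<Sum>f\<in>words_on (insert a D). \<phi> f) = (\<Sum>(v, g)\<in>UNIV \<times> (words_on D :: ('a \<Rightarrow> 'f) set). \<phi> (g(a := v)))"
    unfolding words_on_insert[OF assms] by (simp add: sum.reindex split_def)
  then show ?thesis by (simp add: sum.cartesian_product)
qed

lemma hamming_wt_fun_upd:
  assumes "finite D" "a \<notin> D" "g \<in> words_on D"
  shows "hamming_wt (insert a D) (g(a := v)) = hamming_wt D g + (if v = 0 then 0 else 1)"
proof -
  have "{x\<in>insert a D. (g(a := v)) x \<noteq> 0}
      = (if v = 0 then {x\<in>D. g x \<noteq> 0} else insert a {x\<in>D. g x \<noteq> 0})"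
    using assms(2) by auto
  then show ?thesis unfolding hamming_wt_def using assms by auto
qed

lemma sum_UNIV_remove_zero:
  fixes F :: "'f::{zero,finite} \<Rightarrow> 'b::comm_semiring_1"
  assumes "\<And>v. v \<noteq> 0 \<Longrightarrow> F v = G"
  shows "(\<Sum>v\<in>UNIV. F v) = F 0 + of_nat (CARD('f) - 1) * G"
proof -
  have "(\<Sum>v\<in>UNIV. F v) = F 0 + (\<Sum>v\<in>UNIV - {0::'f}. G)"
    using assms by (simp add: sum.remove[of UNIV 0 F])
  then show ?thesis by (simp add: card_Diff_singleton)
qed

lemma weight_enumerator:
  assumes "finite D"
  shows "(\<Sum>f\<in>(words_on D :: ('a \<Rightarrow> 'f::{zero,finite}) set). (x::real) ^ hamming_wt D f)
           = (1 + real (CARD('f) - 1) * x) ^ card D"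
  using assms
proof (induction D rule: finite_induct)
  case empty
  then show ?case by (simp add: words_on_empty hamming_wt_def)
next
  case (insert a D)
  let ?W = "words_on D :: ('a \<Rightarrow> 'f) set"
  have "(\<Sum>f\<in>(words_on (insert a D) :: ('a \<Rightarrow> 'f) set). x ^ hamming_wt (insert a D) f)
      = (\<Sum>v\<in>UNIV. \<Sum>g\<in>?W. x ^ hamming_wt (insert a D) (g(a := v)))"
    by (rule sum_words_on_insert[OF insert(2)])
  also have "\<dots> = (\<Sum>v\<in>(UNIV::'f set). \<Sum>g\<in>?W. x ^ (hamming_wt D g + (if v = 0 then 0 else 1)))"
    by (intro sum.cong refl) (simp add: hamming_wt_fun_upd insert)
  also have "\<dots> = (\<Sum>v\<in>(UNIV::'f set). (if v = 0 then 1 else x) * (\<Sum>g\<in>?W. x ^ hamming_wt D g))"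
    by (intro sum.cong refl) (auto simp: power_add sum_distrib_left mult.commute)
  also have "\<dots> = (1 + real (CARD('f) - 1) * x) * (\<Sum>g\<in>?W. x ^ hamming_wt D g)"
    by (subst sum_UNIV_remove_zero) (auto simp: algebra_simps)
  finally show ?case using insert by simp
qed

lemma card_words_of_weight:
  assumes "finite D"
  shows "card {f\<in>(words_on D :: ('a \<Rightarrow> 'f::{zero,finite}) set). hamming_wt D f = t}
           = (card D choose t) * (CARD('f) - 1) ^ t"
  using assms
proof (induction D arbitrary: t rule: finite_induct)
  case empty
  then show ?case by (cases t) (auto simp: words_on_empty hamming_wt_def)
next
  case (insert a D)
  let ?W = "words_on D :: ('a \<Rightarrow> 'f) set"
  have fin: "finite (words_on D' :: ('a \<Rightarrow> 'f) set)" if "finite D'" for D'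
    using finite_words_on[OF that] .
  have "card {f\<in>(words_on (insert a D) :: ('a \<Rightarrow> 'f) set). hamming_wt (insert a D) f = t}
      = (\<Sum>f\<in>(words_on (insert a D) :: ('a \<Rightarrow> 'f) set). of_bool (hamming_wt (insert a D) f = t))"
    using fin[of "insert a D"] insert(1) by (simp add: Int_def)
  also have "\<dots> = (\<Sum>v\<in>UNIV. \<Sum>g\<in>?W. of_bool (hamming_wt (insert a D) (g(a := v)) = t))"
    by (rule sum_words_on_insert[OF insert(2)])
  also have "\<dots> = (\<Sum>v\<in>(UNIV::'f set). \<Sum>g\<in>?W. of_bool (hamming_wt D g + (if v = 0 then 0 else 1) = t))"
    by (intro sum.cong refl) (simp add: hamming_wt_fun_upd insert)
  also have "\<dots> = (\<Sum>g\<in>?W. of_bool (hamming_wt D g = t))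
                    + (CARD('f) - 1) * (\<Sum>g\<in>?W. of_bool (hamming_wt D g + 1 = t))"
    by (subst sum_UNIV_remove_zero) auto
  also have "\<dots> = card {g\<in>?W. hamming_wt D g = t} + (CARD('f) - 1) * card {g\<in>?W. hamming_wt D g + 1 = t}"
    using fin[OF insert(1)] by (simp add: Int_def)
  finally have step: "card {f\<in>(words_on (insert a D) :: ('a \<Rightarrow> 'f) set). hamming_wt (insert a D) f = t}
      = card {g\<in>?W. hamming_wt D g = t} + (CARD('f) - 1) * card {g\<in>?W. hamming_wt D g + 1 = t}" .
  show ?case
  proof (cases t)
    case 0
    then show ?thesis using step insert by simp
  next
    case (Suc s)
    then show ?thesis using step insert.IH[of t] insert.IH[of s] insert.hyps by (simp add: algebra_simps)
  qed
qed

definition binomial_term :: "nat \<Rightarrow> real \<Rightarrow> nat \<Rightarrow> real" where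
  "binomial_term N p s = real (N choose s) * p ^ s * (1 - p) ^ (N - s)"

lemma binomial_term_ratio:
  assumes "s < N"
  shows "binomial_term N p (Suc s) * (real (Suc s) * (1 - p)) = binomial_term N p s * (real (N - s) * p)"
proof -
  have e1: "(1 - p) ^ (N - Suc s) * (1 - p) = (1 - p) ^ (N - s)"
    using assms by (metis Suc_diff_Suc power_Suc2)
  have e2: "real (Suc s) * real (N choose Suc s) = real (N - s) * real (N choose s)"
    by (metis binomial_absorb_comp binomial_absorption of_nat_mult)
  have "binomial_term N p (Suc s) * (real (Suc s) * (1 - p))
      = (real (Suc s) * real (N choose Suc s)) * p ^ Suc s * ((1 - p) ^ (N - Suc s) * (1 - p))"
    unfolding binomial_term_def by (simp add: algebra_simps)
  also have "\<dots> = binomial_term N p s * (real (N - s) * p)"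
    unfolding e1 e2 binomial_term_def by (simp add: algebra_simps)
  finally show ?thesis .
qed

lemma binomial_term_Suc_ge:
  fixes N t s :: nat
  defines "p \<equiv> real t / real N"
  assumes t: "t < N" and s: "s < t"
  shows "binomial_term N p s \<le> binomial_term N p (Suc s)"
proof -
  have p: "0 < p" "p < 1" "real N * p = real t" unfolding p_def using t s by auto
  have "real (Suc s) * (real N - real t) \<le> (real N - real s) * real t"
    using s t mult_right_mono[of "real (Suc s)" "real t" "real N"] by (simp add: algebra_simps)
  also have "real (Suc s) * (real N - real t) = real N * (real (Suc s) * (1 - p))"
    using p by (simp add: algebra_simps)
  also have "(real N - real s) * real t = real N * (real (N - s) * p)"
    using p s t by (simp add: algebra_simps of_nat_diff)
  finally have "real (Suc s) * (1 - p) \<le> real (N - s) * p"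
    using t by (simp add: mult_le_cancel_left_pos)
  then have "binomial_term N p s * (real (Suc s) * (1 - p)) \<le> binomial_term N p (Suc s) * (real (Suc s) * (1 - p))"
    unfolding binomial_term_ratio[OF less_trans[OF s t]]
    using p by (intro mult_left_mono) (auto simp: binomial_term_def)
  then show ?thesis using p by (simp add: mult_le_cancel_right)
qed

lemma binomial_term_Suc_le:
  fixes N t s :: nat
  defines "p \<equiv> real t / real N"
  assumes t: "0 < t" and s: "t \<le> s" "s < N"
  shows "binomial_term N p (Suc s) \<le> binomial_term N p s"
proof -
  have p: "0 < p" "p < 1" "real N * p = real t" unfolding p_def using t s by auto
  have "real N * real t \<le> real N * real s" using s by (simp add: mult_left_mono)
  moreover have "real (Suc s) * (real N - real t) - (real N - real s) * real t
      = (real N * real s - real N * real t) + (real N - real t)"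
    by (simp add: algebra_simps)
  ultimately have "(real N - real s) * real t \<le> real (Suc s) * (real N - real t)"
    using s by linarith
  also have "real (Suc s) * (real N - real t) = real N * (real (Suc s) * (1 - p))"
    using p by (simp add: algebra_simps)
  also have "(real N - real s) * real t = real N * (real (N - s) * p)"
    using p s by (simp add: algebra_simps of_nat_diff)
  finally have "real (N - s) * p \<le> real (Suc s) * (1 - p)"
    using s by (simp add: mult_le_cancel_left_pos)
  then have "binomial_term N p (Suc s) * (real (Suc s) * (1 - p)) \<le> binomial_term N p s * (real (Suc s) * (1 - p))"
    unfolding binomial_term_ratio[OF s(2)]
    using p by (intro mult_left_mono) (auto simp: binomial_term_def)
  then show ?thesis using p by (simp add: mult_le_cancel_right)
qed

lemma binomial_term_le_mode:
  fixes N t s :: nat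
  defines "p \<equiv> real t / real N"
  assumes t: "0 < t" "t < N" and s: "s \<le> N"
  shows "binomial_term N p s \<le> binomial_term N p t"
proof (cases "s \<le> t")
  case True
  then show ?thesis unfolding p_def
    by (induction rule: inc_induct) (auto intro: order_trans[OF binomial_term_Suc_ge[OF t(2)]])
next
  case False
  then have "t \<le> s" by simp
  then show ?thesis unfolding p_def
    using s by (induction rule: dec_induct) (auto intro: order_trans[OF binomial_term_Suc_le[OF t(1)]])
qed

lemma binomial_mode_lower_bound:
  fixes N t :: nat
  defines "p \<equiv> real t / real N"
  assumes "0 < t" "t < N"
  shows "1 / real (N + 1) \<le> binomial_term N p t"
proof -
  have "1 = (p + (1 - p)) ^ N" by simp
  also have "\<dots> = (\<Sum>s\<le>N. binomial_term N p s)"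
    unfolding binomial_ring binomial_term_def by (simp add: algebra_simps)
  also have "\<dots> \<le> (\<Sum>s\<le>N. binomial_term N p t)"
    using assms(2,3) unfolding p_def by (intro sum_mono binomial_term_le_mode) auto
  finally show ?thesis by (simp add: divide_le_eq mult.commute del: of_nat_Suc of_nat_add)
qed

lemma qentropy_mult_ln:
  assumes "0 < x" "x < 1" "1 < q"
  shows "qentropy q x * ln q = x * ln (q - 1) - x * ln x - (1 - x) * ln (1 - x)"
  using assms unfolding qentropy_def log_def by (simp add: field_simps)

lemma chernoff_optimum:
  fixes q \<delta> :: real and N :: nat
  defines "x \<equiv> \<delta> / ((q - 1) * (1 - \<delta>))"
  assumes q: "1 < q" and \<delta>: "0 < \<delta>" "\<delta> < 1"
  shows "x powr (- \<delta> * real N) * (1 + (q - 1) * x) ^ N = q powr (real N * qentropy q \<delta>)"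
proof -
  have x0: "0 < x" unfolding x_def using q \<delta> by auto
  have "(q - 1) * x = \<delta> / (1 - \<delta>)" unfolding x_def using q \<delta> by simp
  then have "1 + (q - 1) * x = 1 / (1 - \<delta>)" using \<delta> by (simp add: field_simps)
  then have "x powr (- \<delta> * real N) * (1 + (q - 1) * x) ^ N = exp (- \<delta> * real N * ln x) * exp (- real N * ln (1 - \<delta>))"
    using x0 \<delta>
    by (simp add: powr_def ln_realpow[symmetric] ln_div exp_of_nat_mult[symmetric] power_divide)
       (simp add: exp_minus field_simps exp_ln)
  also have "\<dots> = exp (real N * (qentropy q \<delta> * ln q))"
  proof -
    have lx: "ln x = ln \<delta> - ln (q - 1) - ln (1 - \<delta>)"
      unfolding x_def using q \<delta> by (simp add: ln_div ln_mult)
    show ?thesis unfolding exp_add[symmetric] qentropy_mult_ln[OF \<delta> q] lx by (simp add: algebra_simps)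
  qed
  also have "\<dots> = q powr (real N * qentropy q \<delta>)" using q by (simp add: powr_def mult.commute mult.left_commute)
  finally show ?thesis .
qed

lemma card_low_weight_words_le:
  fixes \<delta> :: real
  assumes "finite D" "2 \<le> CARD('f::{zero,finite})" "0 < \<delta>" "\<delta> < 1 - 1 / real CARD('f)"
  shows "real (card {f\<in>(words_on D :: ('a \<Rightarrow> 'f) set). real (hamming_wt D f) \<le> \<delta> * real (card D)})
          \<le> real CARD('f) powr (real (card D) * qentropy (real CARD('f)) \<delta>)"
proof -
  define q where "q = real CARD('f)"
  define N where "N = real (card D)"
  have q2: "2 \<le> q" using assms unfolding q_def by simp
  have d1: "\<delta> < 1" using assms q2 unfolding q_def[symmetric] by (smt (verit) divide_pos_pos)
  \<comment> \<open>Chernoff: weight each low-weight word by \<open>x powr (wt - \<delta> N) \<ge> 1\<close>, for the optimal \<open>x \<le> 1\<close>.\<close>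
  define x where "x = \<delta> / ((q - 1) * (1 - \<delta>))"
  have x0: "0 < x" unfolding x_def using q2 d1 assms by auto
  have "\<delta> * q < q - 1" using assms(4) q2 unfolding q_def[symmetric] by (simp add: field_simps)
  then have "\<delta> \<le> (q - 1) * (1 - \<delta>)" by (simp add: algebra_simps)
  then have x1: "x \<le> 1" unfolding x_def using q2 d1 by (simp add: divide_simps)
  let ?W = "words_on D :: ('a \<Rightarrow> 'f) set"
  let ?S = "{f\<in>?W. real (hamming_wt D f) \<le> \<delta> * N}"
  have "real (card ?S) = (\<Sum>f\<in>?S. 1)" by simp
  also have "\<dots> \<le> (\<Sum>f\<in>?S. x powr (real (hamming_wt D f) - \<delta> * N))"
  proof (intro sum_mono)
    fix f assume "f \<in> ?S"
    then have e: "0 \<le> - (real (hamming_wt D f) - \<delta> * N)" by simp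
    have "1 \<le> (1/x) powr (- (real (hamming_wt D f) - \<delta> * N))"
      by (rule ge_one_powr_ge_zero[OF _ e]) (use x0 x1 in simp)
    also have "\<dots> = x powr (real (hamming_wt D f) - \<delta> * N)"
      using x0 by (simp add: powr_divide powr_minus_divide powr_diff)
    finally show "1 \<le> x powr (real (hamming_wt D f) - \<delta> * N)" .
  qed
  also have "\<dots> \<le> (\<Sum>f\<in>?W. x powr (real (hamming_wt D f) - \<delta> * N))"
    by (intro sum_mono2 finite_words_on assms(1)) auto
  also have "\<dots> = (\<Sum>f\<in>?W. x powr (- \<delta> * N) * x ^ hamming_wt D f)"
    using x0 by (intro sum.cong refl) (simp add: powr_diff powr_realpow powr_minus divide_simps)
  also have "\<dots> = x powr (- \<delta> * N) * (1 + (q - 1) * x) ^ card D"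
    using assms(2) by (simp add: sum_distrib_left[symmetric] weight_enumerator[OF assms(1)] q_def of_nat_diff)
  also have "\<dots> = q powr (N * qentropy q \<delta>)"
    unfolding x_def N_def using q2 d1 assms(3) by (intro chernoff_optimum) auto
  finally show ?thesis unfolding q_def N_def .
qed

lemma card_words_of_weight_ge:
  assumes "finite D" "2 \<le> CARD('f::{zero,finite})" "0 < t" "t < card D"
  shows "real CARD('f) powr (real (card D) * qentropy (real CARD('f)) (real t / real (card D))) / real (card D + 1)
         \<le> real (card {f\<in>(words_on D :: ('a \<Rightarrow> 'f) set). hamming_wt D f = t})"
proof -
  define q where "q = real CARD('f)"
  define N where "N = card D"
  define p where "p = real t / real N"
  have q2: "2 \<le> q" using assms unfolding q_def by simp
  have p0: "0 < p" "p < 1" unfolding p_def using assms N_def by auto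
  have pos: "0 < p ^ t * (1 - p) ^ (N - t)" using p0 by simp
  have card_eq: "real (card {f\<in>(words_on D :: ('a \<Rightarrow> 'f) set). hamming_wt D f = t}) = real (N choose t) * (q - 1) ^ t"
    unfolding card_words_of_weight[OF assms(1)] N_def q_def using assms(2) by (simp add: of_nat_diff)
  have mode: "1 / real (N + 1) \<le> real (N choose t) * p ^ t * (1 - p) ^ (N - t)"
    unfolding p_def using binomial_mode_lower_bound[of t N] assms N_def by (simp add: binomial_term_def)
  have key: "q powr (real N * qentropy q p) = (q - 1) ^ t / (p ^ t * (1 - p) ^ (N - t))"
  proof -
    have Np: "real N * p = real t" "real N * (1 - p) = real (N - t)"
      unfolding p_def using assms N_def by (auto simp: algebra_simps of_nat_diff)
    have "q powr (real N * qentropy q p) = exp (real N * (qentropy q p * ln q))"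
      using q2 by (simp add: powr_def mult.commute mult.left_commute)
    also have "\<dots> = exp (real N * (p * ln (q - 1) - p * ln p - (1 - p) * ln (1 - p)))"
      using qentropy_mult_ln[OF p0, of q] q2 by simp
    also have "real N * (p * ln (q - 1) - p * ln p - (1 - p) * ln (1 - p))
       = (real N * p) * ln (q - 1) - (real N * p) * ln p - (real N * (1 - p)) * ln (1 - p)"
      by (simp add: algebra_simps)
    also have "exp \<dots> = (q - 1) ^ t / (p ^ t * (1 - p) ^ (N - t))"
      unfolding Np using q2 p0 by (simp add: exp_diff exp_of_nat_mult exp_ln)
    finally show ?thesis .
  qed
  have "q powr (real N * qentropy q p) / real (N + 1)
      = (q - 1) ^ t * (1 / real (N + 1)) / (p ^ t * (1 - p) ^ (N - t))"
    unfolding key by simp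
  also have "\<dots> \<le> (q - 1) ^ t * (real (N choose t) * p ^ t * (1 - p) ^ (N - t)) / (p ^ t * (1 - p) ^ (N - t))"
    using mode q2 pos by (intro divide_right_mono mult_left_mono) auto
  also have "\<dots> = real (N choose t) * (q - 1) ^ t * (p ^ t * (1 - p) ^ (N - t)) / (p ^ t * (1 - p) ^ (N - t))"
    by (simp add: mult_ac)
  also have "\<dots> = real (N choose t) * (q - 1) ^ t"
    by (rule nonzero_mult_div_cancel_right[OF pos[THEN less_imp_neq, THEN not_sym]])
  finally show ?thesis unfolding card_eq q_def N_def p_def .
qed

section \<open>The group algebra and its ideals\<close>

definition gunit :: "'g::{finite,ab_group_add} \<Rightarrow> 'f::{finite,field}" where
  "gunit = (\<lambda>w. if w = 0 then 1 else 0)"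

lemma gconv_diff_right: "gconv x (y - y') = gconv x y - gconv x y'"
  unfolding gconv_def by (auto simp: fun_eq_iff algebra_simps sum_subtractf)

lemma gconv_zero_right: "gconv x 0 = 0"
  unfolding gconv_def by (auto simp: fun_eq_iff)

lemma gconv_scale_right: "gconv x (\<lambda>z. c * y z) = (\<lambda>z. c * gconv x y z)"
  unfolding gconv_def by (auto simp: fun_eq_iff algebra_simps sum_distrib_left)

lemma gconv_shift_right: "gconv x (\<lambda>w. y (w + g)) = (\<lambda>z. gconv x y (z + g))"
  unfolding gconv_def by (auto simp: fun_eq_iff algebra_simps)

lemma gconv_gunit_right: "gconv x gunit = x"
proof
  fix z
  have "gconv x gunit z = (\<Sum>u\<in>UNIV. if u = z then x u else 0)"
    unfolding gconv_def gunit_def by (intro sum.cong refl) auto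
  then show "gconv x gunit z = x z" by simp
qed

lemma gconv_gunit_left:
  fixes y :: "'g::{finite,ab_group_add} \<Rightarrow> 'f::{finite,field}"
  shows "gconv gunit y = y"
proof
  fix z
  have "gconv gunit y z = (\<Sum>u\<in>(UNIV::'g set). if u = 0 then y z else 0)"
    unfolding gconv_def gunit_def by (intro sum.cong refl) auto
  then show "gconv gunit y z = y z" by simp
qed

definition lin_subspace :: "('g \<Rightarrow> 'f::field) set \<Rightarrow> bool" where
  "lin_subspace S \<longleftrightarrow> 0 \<in> S \<and> (\<forall>x\<in>S. \<forall>y\<in>S. x - y \<in> S) \<and> (\<forall>c. \<forall>x\<in>S. (\<lambda>z. c * x z) \<in> S)"

definition shift_invariant :: "('g::ab_group_add \<Rightarrow> 'f) set \<Rightarrow> bool" where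
  "shift_invariant S \<longleftrightarrow> (\<forall>g. \<forall>x\<in>S. (\<lambda>z. x (z + g)) \<in> S)"

lemma lin_subspace_zero: "lin_subspace S \<Longrightarrow> 0 \<in> S"
  unfolding lin_subspace_def by blast

lemma lin_subspace_diff: "lin_subspace S \<Longrightarrow> x \<in> S \<Longrightarrow> y \<in> S \<Longrightarrow> x - y \<in> S"
  unfolding lin_subspace_def by blast

lemma lin_subspace_scale: "lin_subspace S \<Longrightarrow> x \<in> S \<Longrightarrow> (\<lambda>z. c * x z) \<in> S"
  unfolding lin_subspace_def by blast

lemma lin_subspace_add: "lin_subspace S \<Longrightarrow> x \<in> S \<Longrightarrow> y \<in> S \<Longrightarrow> x + y \<in> S"
  using lin_subspace_diff[of S x "0 - y"] lin_subspace_diff[of S 0 y] lin_subspace_zero[of S] by simp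

lemma lin_subspaceI:
  "0 \<in> S \<Longrightarrow> (\<And>x y. x \<in> S \<Longrightarrow> y \<in> S \<Longrightarrow> x - y \<in> S)
   \<Longrightarrow> (\<And>c x. x \<in> S \<Longrightarrow> (\<lambda>z. c * x z) \<in> S) \<Longrightarrow> lin_subspace S"
  unfolding lin_subspace_def by blast

definition gen_ideal :: "nat \<Rightarrow> (nat \<Rightarrow> 'g::{finite,ab_group_add} \<Rightarrow> 'f::{finite,field}) \<Rightarrow> ('g \<Rightarrow> 'f) set" where
  "gen_ideal k b = {v. \<exists>a. v = (\<lambda>z. \<Sum>i<k. gconv (b i) (a i) z)}"

lemma lin_subspace_gen_ideal: "lin_subspace (gen_ideal k b)"
proof (rule lin_subspaceI)
  show "0 \<in> gen_ideal k b" unfolding gen_ideal_def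
    by (rule CollectI, rule exI[of _ "\<lambda>_. 0"]) (simp add: gconv_zero_right fun_eq_iff)
next
  fix x y assume "x \<in> gen_ideal k b" "y \<in> gen_ideal k b"
  then obtain a a' where "x = (\<lambda>z. \<Sum>i<k. gconv (b i) (a i) z)" "y = (\<lambda>z. \<Sum>i<k. gconv (b i) (a' i) z)"
    unfolding gen_ideal_def by auto
  then show "x - y \<in> gen_ideal k b" unfolding gen_ideal_def
    by (intro CollectI exI[of _ "\<lambda>i. a i - a' i"]) (simp add: gconv_diff_right fun_eq_iff sum_subtractf)
next
  fix c x assume "x \<in> gen_ideal k b"
  then obtain a where "x = (\<lambda>z. \<Sum>i<k. gconv (b i) (a i) z)"
    unfolding gen_ideal_def by auto
  then show "(\<lambda>z. c * x z) \<in> gen_ideal k b" unfolding gen_ideal_def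
    by (intro CollectI exI[of _ "\<lambda>i w. c * a i w"]) (simp add: gconv_scale_right fun_eq_iff sum_distrib_left)
qed

lemma shift_invariant_gen_ideal: "shift_invariant (gen_ideal k b)"
  unfolding shift_invariant_def
proof (intro allI ballI)
  fix g x assume "x \<in> gen_ideal k b"
  then obtain a where "x = (\<lambda>z. \<Sum>i<k. gconv (b i) (a i) z)"
    unfolding gen_ideal_def by auto
  then show "(\<lambda>z. x (z + g)) \<in> gen_ideal k b" unfolding gen_ideal_def
    by (intro CollectI exI[of _ "\<lambda>i w. a i (w + g)"]) (simp add: gconv_shift_right fun_eq_iff)
qed

lemma gen_ideal_generator: "i < k \<Longrightarrow> b i \<in> gen_ideal k b"
proof -
  assume i: "i < k"
  have "(\<lambda>z. \<Sum>i'<k. gconv (b i') (if i' = i then gunit else 0) z) = b i"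
  proof
    fix z
    have "(\<Sum>i'<k. gconv (b i') (if i' = i then gunit else 0) z) = (\<Sum>i'<k. if i' = i then b i z else 0)"
      by (intro sum.cong refl) (auto simp: gconv_gunit_right gconv_zero_right)
    then show "(\<Sum>i'<k. gconv (b i') (if i' = i then gunit else 0) z) = b i z" using i by simp
  qed
  then show ?thesis unfolding gen_ideal_def by (intro CollectI exI[of _ "\<lambda>i'. if i' = i then gunit else 0"]) simp
qed

lemma gen_ideal_eq_UNIV:
  assumes "0 < k" "b 0 = gunit"
  shows "gen_ideal k b = UNIV"
proof -
  have "v \<in> gen_ideal k b" for v
  proof -
    have "(\<lambda>z. \<Sum>i<k. gconv (b i) (if i = 0 then v else 0) z) = v"
    proof
      fix z
      have "(\<Sum>i<k. gconv (b i) (if i = 0 then v else 0) z) = (\<Sum>i<k. if i = 0 then v z else 0)"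
        by (intro sum.cong refl) (auto simp: assms(2) gconv_gunit_left gconv_zero_right)
      then show "(\<Sum>i<k. gconv (b i) (if i = 0 then v else 0) z) = v z" using assms(1) by simp
    qed
    then show ?thesis unfolding gen_ideal_def by (intro CollectI exI[of _ "\<lambda>i. if i = 0 then v else 0"]) simp
  qed
  then show ?thesis by auto
qed

section \<open>Reduction of the expectation to ideals\<close>

definition cols :: "nat \<Rightarrow> 'b set \<Rightarrow> (nat \<Rightarrow> 'b::zero) set" where
  "cols n I = {c. \<forall>j. (j < n \<longrightarrow> c j \<in> I) \<and> (\<not> j < n \<longrightarrow> c j = 0)}"

lemma cols_Suc: "cols (Suc n) I = (\<lambda>(v, c). c(n := v)) ` (I \<times> cols n I)"
proof (intro equalityI subsetI)
  fix c assume "c \<in> cols (Suc n) I"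
  then have "c = (\<lambda>(v, c). c(n := v)) (c n, c(n := 0))" "(c n, c(n := 0)) \<in> I \<times> cols n I"
    unfolding cols_def by auto
  then show "c \<in> (\<lambda>(v, c). c(n := v)) ` (I \<times> cols n I)" by blast
qed (auto simp: cols_def)

lemma cols_0: "cols 0 I = {\<lambda>_. 0}"
  unfolding cols_def by auto

lemma card_cols: "finite I \<Longrightarrow> card (cols n I) = card I ^ n"
proof (induction n)
  case (Suc n)
  have "inj_on (\<lambda>(v, c). c(n := v)) (I \<times> cols n I)"
    unfolding inj_on_def cols_def by (auto simp: fun_eq_iff)
  then show ?case unfolding cols_Suc using Suc by (simp add: card_image card_cartesian_product)
qed (simp add: cols_0)

lemma finite_cols: "finite I \<Longrightarrow> finite (cols n I)"
  by (induction n) (simp_all add: cols_0 cols_Suc)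

lemma gvecs_eq_cols: "gvecs k = cols k UNIV"
  unfolding gvecs_def cols_def by (auto simp: zero_fun_def)

lemma gmats_eq_cols: "gmats k n = cols k (cols n UNIV)"
  unfolding gmats_def cols_def by (auto simp: zero_fun_def fun_eq_iff) (metis not_less)

lemma vecmat_diff: "vecmat k n b (A - A') = vecmat k n b A - vecmat k n b A'"
  unfolding vecmat_def by (auto simp: fun_eq_iff gconv_diff_right sum_subtractf)

lemma vecmat_image_gmats: "vecmat k n b ` gmats k n = cols n (gen_ideal k b)"
proof (intro equalityI subsetI)
  fix c assume "c \<in> vecmat k n b ` gmats k n"
  then obtain A where c: "c = vecmat k n b A" by auto
  show "c \<in> cols n (gen_ideal k b)"
    unfolding cols_def c vecmat_def gen_ideal_def by (auto intro: exI[of _ "\<lambda>i. A i _"])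
next
  fix c assume c: "c \<in> cols n (gen_ideal k b)"
  then have "\<forall>j. \<exists>a. j < n \<longrightarrow> c j = (\<lambda>z. \<Sum>i<k. gconv (b i) (a i) z)"
    unfolding cols_def gen_ideal_def by auto
  then obtain a where a: "\<And>j. j < n \<Longrightarrow> c j = (\<lambda>z. \<Sum>i<k. gconv (b i) (a j i) z)"
    by metis
  define A where "A = (\<lambda>i j. if i < k \<and> j < n then a j i else 0)"
  have "A \<in> gmats k n" unfolding A_def gmats_def by (auto simp: zero_fun_def)
  moreover have "vecmat k n b A = c"
  proof
    fix j
    show "vecmat k n b A j = c j"
      using c a[of j] unfolding vecmat_def A_def cols_def by (auto simp: zero_fun_def intro!: sum.cong)
  qed
  ultimately show "c \<in> vecmat k n b ` gmats k n" by blast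
qed

lemma card_hom_fibre:
  fixes \<phi> :: "'a::ab_group_add \<Rightarrow> 'b::ab_group_add"
  assumes M0: "0 \<in> M" and Md: "\<And>x y. x \<in> M \<Longrightarrow> y \<in> M \<Longrightarrow> x - y \<in> M"
    and hom: "\<And>x y. x \<in> M \<Longrightarrow> y \<in> M \<Longrightarrow> \<phi> (x - y) = \<phi> x - \<phi> y"
    and y: "y \<in> \<phi> ` M"
  shows "card {x\<in>M. \<phi> x = y} = card {u\<in>M. \<phi> u = 0}"
proof -
  obtain x0 where x0: "x0 \<in> M" "y = \<phi> x0" using y by auto
  have phi0: "\<phi> 0 = 0" using hom[OF M0 M0] by simp
  have nx0: "0 - x0 \<in> M" using Md[OF M0 x0(1)] .
  have "{x\<in>M. \<phi> x = y} = (\<lambda>u. u + x0) ` {u\<in>M. \<phi> u = 0}"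
  proof (intro equalityI subsetI)
    fix x assume x: "x \<in> {x\<in>M. \<phi> x = y}"
    then have "x - x0 \<in> {u\<in>M. \<phi> u = 0}" using Md[of x x0] hom[of x x0] x0 by auto
    moreover have "x = (x - x0) + x0" by simp
    ultimately show "x \<in> (\<lambda>u. u + x0) ` {u\<in>M. \<phi> u = 0}" by blast
  next
    fix x assume "x \<in> (\<lambda>u. u + x0) ` {u\<in>M. \<phi> u = 0}"
    then obtain u where u: "u \<in> M" "\<phi> u = 0" "x = u + x0" by auto
    have "x = u - (0 - x0)" using u by simp
    then have "x \<in> M" "\<phi> x = \<phi> u - \<phi> (0 - x0)" using Md[OF u(1) nx0] hom[OF u(1) nx0] by auto
    moreover have "\<phi> (0 - x0) = 0 - y" using hom[OF M0 x0(1)] phi0 x0 by simp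
    ultimately show "x \<in> {x\<in>M. \<phi> x = y}" using u by simp
  qed
  moreover have "inj_on (\<lambda>u. u + x0) {u\<in>M. \<phi> u = 0}" by (auto simp: inj_on_def)
  ultimately show ?thesis by (simp add: card_image)
qed

text \<open>Since all fibres have the same size, a homomorphism pushes the uniform distribution on \<open>M\<close>
  forward to the uniform distribution on its image.\<close>
lemma card_hom_preimage:
  fixes \<phi> :: "'a::ab_group_add \<Rightarrow> 'b::ab_group_add"
  assumes fin: "finite M" and M0: "0 \<in> M" and Md: "\<And>x y. x \<in> M \<Longrightarrow> y \<in> M \<Longrightarrow> x - y \<in> M"
    and hom: "\<And>x y. x \<in> M \<Longrightarrow> y \<in> M \<Longrightarrow> \<phi> (x - y) = \<phi> x - \<phi> y"
  shows "card {x\<in>M. P (\<phi> x)} * card (\<phi> ` M) = card M * card {y\<in>\<phi> ` M. P y}"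
proof -
  define K where "K = {u\<in>M. \<phi> u = 0}"
  have filtered: "card {x\<in>M. Q (\<phi> x)} = card {y\<in>\<phi> ` M. Q y} * card K" for Q
  proof -
    have "card {x\<in>M. Q (\<phi> x)} = (\<Sum>y\<in>\<phi> ` {x\<in>M. Q (\<phi> x)}. card {x\<in>{x\<in>M. Q (\<phi> x)}. \<phi> x = y})"
      using card_eq_sum sum.image_gen[of "{x\<in>M. Q (\<phi> x)}" "\<lambda>_. 1::nat" \<phi>] fin by simp
    also have "\<dots> = (\<Sum>y\<in>{y\<in>\<phi> ` M. Q y}. card K)"
    proof (rule sum.cong)
      show "\<phi> ` {x\<in>M. Q (\<phi> x)} = {y\<in>\<phi> ` M. Q y}" by auto
    next
      fix y assume y: "y \<in> {y\<in>\<phi> ` M. Q y}"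
      then have "{x\<in>{x\<in>M. Q (\<phi> x)}. \<phi> x = y} = {x\<in>M. \<phi> x = y}" by auto
      then show "card {x\<in>{x\<in>M. Q (\<phi> x)}. \<phi> x = y} = card K"
        using card_hom_fibre[OF M0 Md hom] y unfolding K_def by simp
    qed
    finally show ?thesis by simp
  qed
  have "card M = card (\<phi> ` M) * card K" using filtered[of "\<lambda>_. True"] by simp
  then show ?thesis using filtered[of P] by (simp add: mult_ac)
qed

definition weight_window :: "nat \<Rightarrow> real \<Rightarrow> (nat \<Rightarrow> 'g::finite \<Rightarrow> 'f::zero) \<Rightarrow> bool" where
  "weight_window n \<delta> c \<longleftrightarrow> 1 \<le> hweight n c \<and> real (hweight n c) \<le> real CARD('g) * real n * \<delta>"

definition window_fraction :: "nat \<Rightarrow> real \<Rightarrow> ('g::finite \<Rightarrow> 'f::{finite,zero}) set \<Rightarrow> real" where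
  "window_fraction n \<delta> I = real (card {c\<in>cols n I. weight_window n \<delta> c}) / real (card (cols n I))"

lemma window_fraction_nonneg: "0 \<le> window_fraction n \<delta> I"
  unfolding window_fraction_def by simp

lemma ENhat_eq_sum_window_fraction:
  "ENhat TYPE('g::{finite,ab_group_add} \<Rightarrow> 'f::{finite,field}) k n \<delta>
    = (\<Sum>b\<in>(gvecs k :: (nat \<Rightarrow> 'g \<Rightarrow> 'f) set). window_fraction n \<delta> (gen_ideal k b))"
proof -
  let ?M = "gmats k n :: (nat \<Rightarrow> nat \<Rightarrow> 'g \<Rightarrow> 'f) set"
  let ?V = "gvecs k :: (nat \<Rightarrow> 'g \<Rightarrow> 'f) set"
  have finM: "finite ?M" unfolding gmats_eq_cols by (intro finite_cols) simp
  have finV: "finite ?V" unfolding gvecs_eq_cols by (intro finite_cols) simp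
  have M0: "0 \<in> ?M" unfolding gmats_def by auto
  have Md: "A - A' \<in> ?M" if "A \<in> ?M" "A' \<in> ?M" for A A'
    using that unfolding gmats_def by (simp add: zero_fun_def)
  have "ENhat TYPE('g \<Rightarrow> 'f) k n \<delta>
      = (\<Sum>A\<in>?M. \<Sum>b\<in>?V. of_bool (weight_window n \<delta> (vecmat k n b A))) / real (card ?M)"
    using finV unfolding ENhat_def Nhat_def weight_window_def by (simp add: Int_def)
  also have "\<dots> = (\<Sum>b\<in>?V. real (card {A\<in>?M. weight_window n \<delta> (vecmat k n b A)})) / real (card ?M)"
    using finM by (subst sum.swap) (simp add: Int_def)
  also have "\<dots> = (\<Sum>b\<in>?V. real (card {A\<in>?M. weight_window n \<delta> (vecmat k n b A)}) / real (card ?M))"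
    by (rule sum_divide_distrib)
  also have "\<dots> = (\<Sum>b\<in>?V. window_fraction n \<delta> (gen_ideal k b))"
  proof (rule sum.cong[OF refl])
    fix b :: "nat \<Rightarrow> 'g \<Rightarrow> 'f"
    let ?\<phi> = "vecmat k n b"
    have "card {A\<in>?M. weight_window n \<delta> (?\<phi> A)} * card (?\<phi> ` ?M)
        = card ?M * card {c\<in>?\<phi> ` ?M. weight_window n \<delta> c}"
      by (rule card_hom_preimage[OF finM M0 Md]) (assumption | rule vecmat_diff)+
    moreover have "0 < card ?M" "0 < card (?\<phi> ` ?M)"
      using finM M0 by (auto simp: card_gt_0_iff)
    ultimately show "real (card {A\<in>?M. weight_window n \<delta> (?\<phi> A)}) / real (card ?M)
        = window_fraction n \<delta> (gen_ideal k b)"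
      unfolding window_fraction_def vecmat_image_gmats[symmetric]
      by (simp add: field_simps flip: of_nat_mult)
  qed
  finally show ?thesis .
qed

section \<open>Low-weight words in the columns of an ideal\<close>

lemma card_lin_subspace_split:
  fixes S :: "('a \<Rightarrow> 'f::{finite,field}) set"
  assumes S: "lin_subspace S" and f1: "f1 \<in> S" "f1 a \<noteq> 0"
  shows "card S = CARD('f) * card {f\<in>S. f a = 0}"
proof -
  define S0 where "S0 = {f\<in>S. f a = 0}"
  define e where "e = (\<lambda>z. inverse (f1 a) * f1 z)"
  have eS: "e \<in> S" unfolding e_def by (rule lin_subspace_scale[OF S f1(1)])
  have ea: "e a = 1" using f1 unfolding e_def by simp
  have scaled: "(\<lambda>z. v * e z) \<in> S" for v by (rule lin_subspace_scale[OF S eS])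
  define \<Psi> where "\<Psi> = (\<lambda>(v::'f, g). g + (\<lambda>z. v * e z))"
  have "\<Psi> ` (UNIV \<times> S0) = S"
  proof (intro equalityI subsetI)
    fix f assume "f \<in> \<Psi> ` (UNIV \<times> S0)"
    then obtain v g where "g \<in> S0" "f = g + (\<lambda>z. v * e z)" unfolding \<Psi>_def by auto
    then show "f \<in> S" using lin_subspace_add[OF S _ scaled] unfolding S0_def by auto
  next
    fix f assume f: "f \<in> S"
    have "f - (\<lambda>z. f a * e z) \<in> S0"
      using lin_subspace_diff[OF S f scaled] ea unfolding S0_def by simp
    moreover have "f = \<Psi> (f a, f - (\<lambda>z. f a * e z))" unfolding \<Psi>_def by (auto simp: fun_eq_iff)
    ultimately show "f \<in> \<Psi> ` (UNIV \<times> S0)" by blast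
  qed
  moreover have "inj_on \<Psi> (UNIV \<times> S0)"
  proof (rule inj_onI, clarify)
    fix v g v' g' assume g: "g \<in> S0" "g' \<in> S0" and eq: "\<Psi> (v, g) = \<Psi> (v', g')"
    have "g a + v * e a = g' a + v' * e a" using fun_cong[OF eq, of a] unfolding \<Psi>_def by simp
    then have "v = v'" using g ea unfolding S0_def by simp
    then show "v = v' \<and> g = g'" using eq unfolding \<Psi>_def by (auto simp: fun_eq_iff)
  qed
  ultimately have "card S = card ((UNIV::'f set) \<times> S0)" by (metis card_image)
  then show ?thesis unfolding S0_def by (simp add: card_cartesian_product)
qed

lemma information_set_within:
  fixes S :: "('a \<Rightarrow> 'f::{finite,field}) set"
  assumes "finite T" "lin_subspace S" "\<forall>f\<in>S. \<forall>z. z \<notin> T \<longrightarrow> f z = 0"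
  shows "\<exists>J\<subseteq>T. card S = CARD('f) ^ card J \<and> (\<forall>f\<in>S. (\<forall>z\<in>J. f z = 0) \<longrightarrow> f = 0)"
  using assms
proof (induction T arbitrary: S rule: finite_induct)
  case empty
  have "f = 0" if "f \<in> S" for f using empty.prems(2) that by (auto simp: fun_eq_iff)
  then have "S = {0}" using lin_subspace_zero[OF empty.prems(1)] by blast
  then show ?case by (intro exI[of _ "{}"]) auto
next
  case (insert a T)
  define S0 where "S0 = {f\<in>S. f a = 0}"
  have "lin_subspace S0"
    using insert.prems(1) unfolding S0_def
    by (intro lin_subspaceI) (simp_all add: lin_subspace_zero lin_subspace_diff lin_subspace_scale)
  moreover have "\<forall>f\<in>S0. \<forall>z. z \<notin> T \<longrightarrow> f z = 0" using insert.prems(2) unfolding S0_def by auto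
  ultimately have "\<exists>J0\<subseteq>T. card S0 = CARD('f) ^ card J0 \<and> (\<forall>f\<in>S0. (\<forall>z\<in>J0. f z = 0) \<longrightarrow> f = 0)"
    by (rule insert.IH)
  then obtain J0 where J0: "J0 \<subseteq> T" "card S0 = CARD('f) ^ card J0"
      "\<forall>f\<in>S0. (\<forall>z\<in>J0. f z = 0) \<longrightarrow> f = 0"
    by blast
  show ?case
  proof (cases "\<forall>f\<in>S. f a = 0")
    case True
    then have "S0 = S" unfolding S0_def by auto
    moreover have "J0 \<subseteq> insert a T" using J0(1) by auto
    ultimately show ?thesis using J0(2,3) by blast
  next
    case False
    then obtain f1 where "f1 \<in> S" "f1 a \<noteq> 0" by auto
    then have "card S = CARD('f) * card S0"
      unfolding S0_def by (rule card_lin_subspace_split[OF insert.prems(1)])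
    moreover have "a \<notin> J0" "finite J0" using J0(1) insert.hyps finite_subset by auto
    ultimately have "card S = CARD('f) ^ card (insert a J0)" using J0(2) by simp
    moreover have "\<forall>f\<in>S. (\<forall>z\<in>insert a J0. f z = 0) \<longrightarrow> f = 0"
      using J0(3) unfolding S0_def by auto
    moreover have "insert a J0 \<subseteq> insert a T" using J0(1) by auto
    ultimately show ?thesis by blast
  qed
qed

lemma information_set:
  fixes S :: "('g::finite \<Rightarrow> 'f::{finite,field}) set"
  assumes "lin_subspace S"
  obtains J where "card S = CARD('f) ^ card J" "\<forall>f\<in>S. (\<forall>z\<in>J. f z = 0) \<longrightarrow> f = 0"
  using information_set_within[of "UNIV :: 'g set" S] assms by auto

lemma two_le_card_field: "2 \<le> CARD('f::{finite,field})"
proof -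
  have "card {0::'f, 1} \<le> card (UNIV :: 'f set)" by (rule card_mono) auto
  then show ?thesis by simp
qed

lemma hweight_eq_hamming_wt: "hweight n c = hamming_wt ({..<n} \<times> UNIV) (case_prod c)"
proof -
  have "{x\<in>{..<n} \<times> UNIV. case_prod c x \<noteq> 0} = Sigma {..<n} (\<lambda>j. {z. c j z \<noteq> 0})" by auto
  then show ?thesis unfolding hweight_def hamming_wt_def by (simp add: card_SigmaI)
qed

lemma sum_hamming_wt_shifts:
  fixes J :: "'g::{finite,ab_group_add} set" and f :: "'a \<times> 'g \<Rightarrow> 'f::zero"
  assumes "finite A"
  shows "(\<Sum>g\<in>UNIV. hamming_wt (A \<times> (\<lambda>z. z + g) ` J) f) = card J * hamming_wt (A \<times> UNIV) f"
proof -
  have wt_Sigma: "hamming_wt (A \<times> B) f = (\<Sum>j\<in>A. card {z\<in>B. f (j, z) \<noteq> 0})" for B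
  proof -
    have "{x\<in>A \<times> B. f x \<noteq> 0} = Sigma A (\<lambda>j. {z\<in>B. f (j, z) \<noteq> 0})" by auto
    then show ?thesis unfolding hamming_wt_def using assms by (simp add: card_SigmaI)
  qed
  have shifted: "card {z\<in>(\<lambda>z. z + g) ` J. P z} = (\<Sum>u\<in>J. of_bool (P (u + g)))" for P g
  proof -
    have "{z\<in>(\<lambda>z. z + g) ` J. P z} = (\<lambda>z. z + g) ` {u\<in>J. P (u + g)}" by auto
    then have "card {z\<in>(\<lambda>z. z + g) ` J. P z} = card {u\<in>J. P (u + g)}"
      by (simp add: card_image inj_on_def)
    then show ?thesis by (simp add: Int_def)
  qed
  have translate: "(\<Sum>g\<in>UNIV. of_bool (f (j, u + g) \<noteq> 0)) = card {z. f (j, z) \<noteq> 0}" for j u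
  proof -
    have "(\<lambda>g. u + g) ` {g. f (j, u + g) \<noteq> 0} = {z. f (j, z) \<noteq> 0}"
      by (auto intro: image_eqI[where x = "_ - u"])
    then have "card {g. f (j, u + g) \<noteq> 0} = card {z. f (j, z) \<noteq> 0}"
      by (metis card_image add_left_imp_eq inj_onI)
    then show ?thesis by (simp add: Int_def)
  qed
  have "(\<Sum>g\<in>UNIV. hamming_wt (A \<times> (\<lambda>z. z + g) ` J) f)
      = (\<Sum>g\<in>UNIV. \<Sum>j\<in>A. \<Sum>u\<in>J. of_bool (f (j, u + g) \<noteq> 0))"
    unfolding wt_Sigma shifted ..
  also have "\<dots> = (\<Sum>j\<in>A. \<Sum>g\<in>UNIV. \<Sum>u\<in>J. of_bool (f (j, u + g) \<noteq> 0))"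
    by (rule sum.swap)
  also have "\<dots> = (\<Sum>j\<in>A. \<Sum>u\<in>J. \<Sum>g\<in>UNIV. of_bool (f (j, u + g) \<noteq> 0))"
    by (intro sum.cong refl sum.swap)
  also have "\<dots> = card J * hamming_wt (A \<times> UNIV) f"
    unfolding translate wt_Sigma by (simp add: sum_distrib_left)
  finally show ?thesis .
qed

lemma exists_shift_hamming_wt_le:
  fixes J :: "'g::{finite,ab_group_add} set" and f :: "'a \<times> 'g \<Rightarrow> 'f::zero"
  assumes "finite A" "real (hamming_wt (A \<times> UNIV) f) \<le> real CARD('g) * x"
  obtains g where "real (hamming_wt (A \<times> (\<lambda>z. z + g) ` J) f) \<le> real (card J) * x"
proof (rule ccontr)
  assume "\<not> thesis"
  with that have gt: "real (card J) * x < real (hamming_wt (A \<times> (\<lambda>z. z + g) ` J) f)" for g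
    by (meson not_le)
  have "(\<Sum>g\<in>(UNIV::'g set). real (card J) * x) < (\<Sum>g\<in>UNIV. real (hamming_wt (A \<times> (\<lambda>z. z + g) ` J) f))"
    by (rule sum_strict_mono) (simp_all add: gt)
  also have "\<dots> = real (card J) * real (hamming_wt (A \<times> UNIV) f)"
    using sum_hamming_wt_shifts[OF assms(1), of J f] by (metis of_nat_mult of_nat_sum)
  also have "\<dots> \<le> real (card J) * (real CARD('g) * x)"
    using assms(2) by (intro mult_left_mono) auto
  finally show False by (simp add: algebra_simps)
qed

lemma cols_eq_if_agree_on_shifted_information_set:
  fixes I :: "('g::ab_group_add \<Rightarrow> 'f::field) set"
  assumes I: "lin_subspace I" "shift_invariant I"
    and J: "\<forall>f\<in>I. (\<forall>z\<in>J. f z = 0) \<longrightarrow> f = 0"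
    and c: "c \<in> cols n I" "c' \<in> cols n I"
    and agree: "\<forall>j<n. \<forall>u\<in>J. c j (u + g) = c' j (u + g)"
  shows "c = c'"
proof
  fix j
  show "c j = c' j"
  proof (cases "j < n")
    case False
    then show ?thesis using c unfolding cols_def by auto
  next
    case True
    define h where "h = c j - c' j"
    have "h \<in> I" unfolding h_def using c True by (intro lin_subspace_diff[OF I(1)]) (auto simp: cols_def)
    then have "(\<lambda>w. h (w + g)) \<in> I" using I(2) unfolding shift_invariant_def by blast
    moreover have "\<forall>u\<in>J. h (u + g) = 0" using agree True unfolding h_def by simp
    ultimately have "(\<lambda>w. h (w + g)) = 0" using J by (intro mp[OF bspec[OF J]]) simp_all
    then have "h w = 0" for w using fun_cong[of _ 0 "w - g"] by (metis diff_add_cancel zero_fun_apply)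
    then show ?thesis unfolding h_def by (simp add: fun_eq_iff)
  qed
qed

lemma card_low_weight_on_shifted_information_set:
  fixes I :: "('g::{finite,ab_group_add} \<Rightarrow> 'f::{finite,field}) set" and \<delta> :: real
    and n :: nat and g :: 'g and J :: "'g set"
  defines "D \<equiv> {..<n} \<times> (\<lambda>z. z + g) ` J"
  assumes I: "lin_subspace I" "shift_invariant I" and J: "\<forall>f\<in>I. (\<forall>z\<in>J. f z = 0) \<longrightarrow> f = 0"
    and \<delta>: "0 < \<delta>" "\<delta> < 1 - 1 / real CARD('f)"
  shows "real (card {c\<in>cols n I. real (hamming_wt D (case_prod c)) \<le> \<delta> * real (card D)})
           \<le> real CARD('f) powr (real (card D) * qentropy (real CARD('f)) \<delta>)"
proof -
  define restr where "restr c = (\<lambda>x. if x \<in> D then case_prod c x else (0::'f))" for c :: "nat \<Rightarrow> 'g \<Rightarrow> 'f"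
  let ?L = "{c\<in>cols n I. real (hamming_wt D (case_prod c)) \<le> \<delta> * real (card D)}"
  have "card ?L \<le> card {u\<in>(words_on D :: (nat \<times> 'g \<Rightarrow> 'f) set). real (hamming_wt D u) \<le> \<delta> * real (card D)}"
  proof (rule card_inj_on_le)
    show "inj_on restr ?L"
    proof (rule inj_onI)
      fix c c' assume c: "c \<in> ?L" "c' \<in> ?L" and eq: "restr c = restr c'"
      have "c j (u + g) = c' j (u + g)" if "j < n" "u \<in> J" for j u
      proof -
        have "(j, u + g) \<in> D" using that unfolding D_def by auto
        then show ?thesis using fun_cong[OF eq, of "(j, u + g)"] unfolding restr_def by simp
      qed
      then show "c = c'"
        using c by (intro cols_eq_if_agree_on_shifted_information_set[OF I J]) auto
    qed
    have "hamming_wt D (restr c) = hamming_wt D (case_prod c)" for c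
      unfolding hamming_wt_def restr_def by (rule arg_cong[of _ _ card]) auto
    then show "restr ` ?L \<subseteq> {u\<in>words_on D. real (hamming_wt D u) \<le> \<delta> * real (card D)}"
      by (auto simp: words_on_def restr_def)
    show "finite {u\<in>(words_on D :: (nat \<times> 'g \<Rightarrow> 'f) set). real (hamming_wt D u) \<le> \<delta> * real (card D)}"
      unfolding D_def by (simp add: finite_words_on)
  qed
  also have "real \<dots> \<le> real CARD('f) powr (real (card D) * qentropy (real CARD('f)) \<delta>)"
    by (rule card_low_weight_words_le[OF _ two_le_card_field \<delta>]) (simp add: D_def)
  finally show ?thesis by simp
qed

lemma card_low_weight_cols_le:
  fixes I :: "('g::{finite,ab_group_add} \<Rightarrow> 'f::{finite,field}) set" and \<delta> :: real
  assumes I: "lin_subspace I" "shift_invariant I" and \<delta>: "0 < \<delta>" "\<delta> < 1 - 1 / real CARD('f)"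
  shows "real (card {c\<in>cols n I. real (hweight n c) \<le> real CARD('g) * real n * \<delta>})
           \<le> real CARD('g) * real (card I) powr (real n * qentropy (real CARD('f)) \<delta>)"
proof -
  obtain J where cJ: "card I = CARD('f) ^ card J" and J: "\<forall>f\<in>I. (\<forall>z\<in>J. f z = 0) \<longrightarrow> f = 0"
    using information_set[OF I(1)] by blast
  define q where "q = real CARD('f)"
  define H where "H = qentropy q \<delta>"
  define D where "D g = {..<n} \<times> (\<lambda>z. z + g) ` J" for g :: 'g
  define L where "L = {c\<in>cols n I. real (hweight n c) \<le> real CARD('g) * real n * \<delta>}"
  define Lg where "Lg g = {c\<in>cols n I. real (hamming_wt (D g) (case_prod c)) \<le> \<delta> * real (card (D g))}" for g
  have q2: "2 \<le> q" unfolding q_def using two_le_card_field[where 'f='f] by linarith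
  have card_D: "card (D g) = n * card J" for g
    unfolding D_def by (simp add: card_cartesian_product card_image inj_on_def)
  have "L \<subseteq> (\<Union>g. Lg g)"
  proof
    fix c assume c: "c \<in> L"
    then have "real (hamming_wt ({..<n} \<times> UNIV) (case_prod c)) \<le> real CARD('g) * (real n * \<delta>)"
      unfolding L_def hweight_eq_hamming_wt by (simp add: mult.assoc)
    then obtain g where "real (hamming_wt (D g) (case_prod c)) \<le> real (card J) * (real n * \<delta>)"
      unfolding D_def by (rule exists_shift_hamming_wt_le[OF finite_lessThan])
    then show "c \<in> (\<Union>g. Lg g)" using c unfolding L_def Lg_def card_D by (auto simp: algebra_simps)
  qed
  then have "card L \<le> card (\<Union>g. Lg g)"
    by (intro card_mono finite_subset[OF _ finite_cols[of I n]]) (auto simp: Lg_def)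
  also have "\<dots> \<le> (\<Sum>g\<in>UNIV. card (Lg g))" by (rule card_UN_le) simp
  finally have "real (card L) \<le> (\<Sum>g\<in>(UNIV::'g set). real (card (Lg g)))" by (metis of_nat_le_iff of_nat_sum)
  also have "\<dots> \<le> (\<Sum>g\<in>(UNIV::'g set). q powr (real (n * card J) * H))"
  proof (rule sum_mono)
    fix g
    have "real (card (Lg g)) \<le> q powr (real (card (D g)) * H)"
      unfolding Lg_def D_def q_def H_def by (rule card_low_weight_on_shifted_information_set[OF I J \<delta>])
    then show "real (card (Lg g)) \<le> q powr (real (n * card J) * H)" unfolding card_D .
  qed
  also have "\<dots> = real CARD('g) * real (card I) powr (real n * H)"
    using q2 unfolding cJ q_def by (simp add: powr_realpow[symmetric] powr_powr mult_ac)
  finally show ?thesis unfolding L_def H_def q_def .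
qed

section \<open>Bounds on the expectation\<close>

lemma window_fraction_le:
  fixes I :: "('g::{finite,ab_group_add} \<Rightarrow> 'f::{finite,field}) set" and \<delta> :: real
  assumes I: "lin_subspace I" "shift_invariant I" and \<delta>: "0 < \<delta>" "\<delta> < 1 - 1 / real CARD('f)"
  shows "window_fraction n \<delta> I
     \<le> (if I = {0} then 0 else real CARD('g) * real (card I) powr (real n * qentropy (real CARD('f)) \<delta> - real n))"
proof (cases "I = {0}")
  case True
  have "hweight n c = 0" if "c \<in> cols n I" for c
  proof -
    have "c j = 0" for j using that True unfolding cols_def by (cases "j < n") auto
    then show ?thesis unfolding hweight_def by simp
  qed
  then have "{c\<in>cols n I. weight_window n \<delta> c} = {}" unfolding weight_window_def by auto
  then show ?thesis using True unfolding window_fraction_def by (simp only: card.empty) simp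
next
  case False
  have card_I: "0 < card I" using lin_subspace_zero[OF I(1)] by (auto simp: card_gt_0_iff)
  have "card {c\<in>cols n I. weight_window n \<delta> c} \<le> card {c\<in>cols n I. real (hweight n c) \<le> real CARD('g) * real n * \<delta>}"
    using finite_cols[of I n] by (intro card_mono) (auto simp: weight_window_def)
  then have "real (card {c\<in>cols n I. weight_window n \<delta> c}) \<le> real CARD('g) * real (card I) powr (real n * qentropy (real CARD('f)) \<delta>)"
    using card_low_weight_cols_le[OF I \<delta>, of n] by linarith
  moreover have den: "real (card (cols n I)) = real (card I) powr real n"
    using card_I by (simp add: card_cols powr_realpow)
  ultimately have "window_fraction n \<delta> I
      \<le> real CARD('g) * real (card I) powr (real n * qentropy (real CARD('f)) \<delta>) / real (card I) powr real n"
    unfolding window_fraction_def den by (intro divide_right_mono) auto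
  also have "\<dots> = real CARD('g) * real (card I) powr (real n * qentropy (real CARD('f)) \<delta> - real n)"
    using card_I by (simp add: powr_diff)
  finally show ?thesis using False by simp
qed

lemma card_generators_le: "card {b\<in>gvecs k. gen_ideal k b = I} \<le> card I ^ k"
proof -
  have "{b\<in>gvecs k. gen_ideal k b = I} \<subseteq> cols k I"
    unfolding gvecs_eq_cols cols_def using gen_ideal_generator by auto
  then have "card {b\<in>gvecs k. gen_ideal k b = I} \<le> card (cols k I)"
    by (intro card_mono finite_cols) simp_all
  then show ?thesis by (simp add: card_cols)
qed

lemma ENhat_le:
  fixes \<delta> :: real
  assumes \<delta>: "0 < \<delta>" "\<delta> < 1 - 1 / real CARD('f::{finite,field})"
    and exponent: "real k + real n * qentropy (real CARD('f)) \<delta> - real n \<le> 0"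
  shows "ENhat TYPE('g::{finite,ab_group_add} \<Rightarrow> 'f) k n \<delta>
     \<le> real CARD(('g \<Rightarrow> 'f) set) * real CARD('g) * 2 powr (real k + real n * qentropy (real CARD('f)) \<delta> - real n)"
proof -
  define H where "H = qentropy (real CARD('f)) \<delta>"
  define V where "V = (gvecs k :: (nat \<Rightarrow> 'g \<Rightarrow> 'f) set)"
  define F where "F I = (if I = {0} then 0 else real CARD('g) * real (card I) powr (real n * H - real n))"
    for I :: "('g \<Rightarrow> 'f) set"
  define C where "C = real CARD('g) * 2 powr (real k + real n * H - real n)"
  have finV: "finite V" unfolding V_def gvecs_eq_cols by (intro finite_cols) simp
  have "ENhat TYPE('g \<Rightarrow> 'f) k n \<delta> \<le> (\<Sum>b\<in>V. F (gen_ideal k b))"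
    unfolding ENhat_eq_sum_window_fraction V_def F_def H_def
    by (intro sum_mono window_fraction_le[OF lin_subspace_gen_ideal shift_invariant_gen_ideal \<delta>])
  also have "\<dots> = (\<Sum>I\<in>gen_ideal k ` V. \<Sum>b\<in>{b\<in>V. gen_ideal k b = I}. F (gen_ideal k b))"
    by (rule sum.image_gen[OF finV])
  also have "\<dots> = (\<Sum>I\<in>gen_ideal k ` V. \<Sum>b\<in>{b\<in>V. gen_ideal k b = I}. F I)"
    by (intro sum.cong refl) auto
  also have "\<dots> \<le> (\<Sum>I\<in>gen_ideal k ` V. C)"
  proof (intro sum_mono)
    fix I assume "I \<in> gen_ideal k ` V"
    then have I: "lin_subspace I" using lin_subspace_gen_ideal by auto
    have "card {b\<in>V. gen_ideal k b = I} \<le> card I ^ k"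
      unfolding V_def by (rule card_generators_le)
    then have "(\<Sum>b\<in>{b\<in>V. gen_ideal k b = I}. F I) \<le> real (card I) ^ k * F I"
      unfolding F_def by (simp add: mult_right_mono flip: of_nat_power)
    also have "\<dots> \<le> C"
    proof (cases "I = {0}")
      case True
      then show ?thesis unfolding F_def C_def by simp
    next
      case False
      then obtain y where "y \<in> I" "y \<noteq> 0" using lin_subspace_zero[OF I] by blast
      then have "card {0, y} \<le> card I" using lin_subspace_zero[OF I] by (intro card_mono) auto
      then have card_I: "2 \<le> real (card I)" using \<open>y \<noteq> 0\<close> by simp
      have "real (card I) ^ k * F I = real CARD('g) * real (card I) powr (real k + real n * H - real n)"
        unfolding F_def using False card_I by (simp add: powr_realpow[symmetric] powr_add[symmetric] algebra_simps)
      also have "\<dots> \<le> C"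
        unfolding C_def using exponent card_I unfolding H_def by (intro mult_left_mono powr_mono2') auto
      finally show ?thesis .
    qed
    finally show "(\<Sum>b\<in>{b\<in>V. gen_ideal k b = I}. F I) \<le> C" .
  qed
  also have "\<dots> = real (card (gen_ideal k ` V)) * C" by simp
  also have "\<dots> \<le> real CARD(('g \<Rightarrow> 'f) set) * C"
  proof (rule mult_right_mono)
    show "real (card (gen_ideal k ` V)) \<le> real CARD(('g \<Rightarrow> 'f) set)"
      by (intro of_nat_mono card_mono) auto
  qed (simp add: C_def)
  finally show ?thesis unfolding C_def H_def by (simp add: mult_ac)
qed

lemma card_cols_hweight_eq:
  "card {c\<in>cols n (UNIV :: ('g::finite \<Rightarrow> 'f::{finite,zero}) set). hweight n c = t}
   = card {u\<in>(words_on ({..<n} \<times> UNIV) :: (nat \<times> 'g \<Rightarrow> 'f) set). hamming_wt ({..<n} \<times> UNIV) u = t}"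
proof -
  have image: "case_prod ` {c\<in>cols n UNIV. hweight n c = t}
      = {u\<in>(words_on ({..<n} \<times> UNIV) :: (nat \<times> 'g \<Rightarrow> 'f) set). hamming_wt ({..<n} \<times> UNIV) u = t}"
  proof (intro equalityI subsetI)
    fix u assume "u \<in> case_prod ` {c\<in>cols n UNIV. hweight n c = t}"
    then obtain c where c: "c \<in> cols n UNIV" "hweight n c = t" "u = case_prod c" by auto
    have "u x = 0" if "x \<notin> {..<n} \<times> UNIV" for x
      using c(1) that unfolding c(3) cols_def by (cases x) auto
    then show "u \<in> {u\<in>words_on ({..<n} \<times> UNIV). hamming_wt ({..<n} \<times> UNIV) u = t}"
      using c(2,3) unfolding words_on_def hweight_eq_hamming_wt by blast
  next
    fix u :: "nat \<times> 'g \<Rightarrow> 'f"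
    assume u: "u \<in> {u\<in>words_on ({..<n} \<times> UNIV). hamming_wt ({..<n} \<times> UNIV) u = t}"
    have "curry u j = 0" if "\<not> j < n" for j
      using u that unfolding words_on_def by (auto simp: fun_eq_iff)
    then have "curry u \<in> {c\<in>cols n UNIV. hweight n c = t}"
      using u unfolding cols_def hweight_eq_hamming_wt case_prod_curry by auto
    then show "u \<in> case_prod ` {c\<in>cols n UNIV. hweight n c = t}"
      by (rule image_eqI[rotated]) simp
  qed
  have "inj_on case_prod {c\<in>cols n (UNIV :: ('g \<Rightarrow> 'f) set). hweight n c = t}"
    by (rule inj_onI) (metis curry_case_prod)
  from card_image[OF this] show ?thesis unfolding image by simp
qed

lemma card_gvecs_gunit_ge:
  assumes "0 < k"
  shows "CARD('g::{finite,ab_group_add} \<Rightarrow> 'f::{finite,field}) ^ (k - 1)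
           \<le> card {b\<in>(gvecs k :: (nat \<Rightarrow> 'g \<Rightarrow> 'f) set). b 0 = gunit}"
proof -
  define cons where "cons b = (\<lambda>i. if i = 0 then gunit else b (i - 1))" for b :: "nat \<Rightarrow> 'g \<Rightarrow> 'f"
  have "cons ` cols (k - 1) UNIV \<subseteq> {b\<in>gvecs k. b 0 = gunit}"
    unfolding gvecs_eq_cols cols_def cons_def using assms by auto
  moreover have "inj_on cons (cols (k - 1) UNIV)"
  proof (rule inj_onI)
    fix b b' assume eq: "cons b = cons b'"
    show "b = b'"
    proof
      fix j show "b j = b' j" using fun_cong[OF eq, of "Suc j"] unfolding cons_def by simp
    qed
  qed
  moreover have "finite (gvecs k :: (nat \<Rightarrow> 'g \<Rightarrow> 'f) set)"
    unfolding gvecs_eq_cols by (intro finite_cols) simp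
  ultimately have "card (cols (k - 1) (UNIV :: ('g \<Rightarrow> 'f) set)) \<le> card {b\<in>(gvecs k :: (nat \<Rightarrow> 'g \<Rightarrow> 'f) set). b 0 = gunit}"
    by (intro card_inj_on_le) auto
  then show ?thesis by (simp add: card_cols)
qed

lemma card_gvecs_gunit_mult_window_fraction_le:
  assumes "0 < k"
  shows "real (card {b\<in>(gvecs k :: (nat \<Rightarrow> 'g::{finite,ab_group_add} \<Rightarrow> 'f::{finite,field}) set). b 0 = gunit})
           * window_fraction n \<delta> (UNIV :: ('g \<Rightarrow> 'f) set)
         \<le> ENhat TYPE('g \<Rightarrow> 'f) k n \<delta>"
proof -
  let ?B = "{b\<in>(gvecs k :: (nat \<Rightarrow> 'g \<Rightarrow> 'f) set). b 0 = gunit}"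
  have "(\<Sum>b\<in>?B. window_fraction n \<delta> (gen_ideal k b)) = (\<Sum>b\<in>?B. window_fraction n \<delta> (UNIV :: ('g \<Rightarrow> 'f) set))"
    by (intro sum.cong refl) (simp add: gen_ideal_eq_UNIV[OF assms])
  then have "real (card ?B) * window_fraction n \<delta> (UNIV :: ('g \<Rightarrow> 'f) set)
      = (\<Sum>b\<in>?B. window_fraction n \<delta> (gen_ideal k b))" by simp
  also have "\<dots> \<le> ENhat TYPE('g \<Rightarrow> 'f) k n \<delta>"
    unfolding ENhat_eq_sum_window_fraction gvecs_eq_cols
    by (intro sum_mono2 finite_cols window_fraction_nonneg) auto
  finally show ?thesis .
qed

lemma window_fraction_UNIV_ge:
  fixes \<delta> :: real
  defines "m \<equiv> CARD('g::finite)" and "q \<equiv> real CARD('f::{finite,field})"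
  assumes t: "0 < t" "t < m * n" "real t \<le> real m * real n * \<delta>"
  shows "q powr (real (m * n) * qentropy q (real t / real (m * n)) - real (m * n)) / real (m * n + 1)
           \<le> window_fraction n \<delta> (UNIV :: ('g \<Rightarrow> 'f) set)"
proof -
  define W where "W = {..<n} \<times> (UNIV :: 'g set)"
  have q2: "2 \<le> q" unfolding q_def using two_le_card_field[where 'f='f] by linarith
  have "q powr (real (m * n) * qentropy q (real t / real (m * n))) / real (m * n + 1)
      \<le> real (card {u\<in>(words_on W :: (nat \<times> 'g \<Rightarrow> 'f) set). hamming_wt W u = t})"
    using card_words_of_weight_ge[of W t] t two_le_card_field[where 'f='f]
    unfolding W_def q_def m_def by (simp add: card_cartesian_product mult.commute)
  also have "\<dots> \<le> real (card {c\<in>cols n (UNIV :: ('g \<Rightarrow> 'f) set). weight_window n \<delta> c})"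
    unfolding W_def card_cols_hweight_eq[symmetric] using t finite_cols[of "UNIV :: ('g \<Rightarrow> 'f) set" n]
    by (intro of_nat_mono card_mono) (auto simp: weight_window_def m_def)
  finally have count: "q powr (real (m * n) * qentropy q (real t / real (m * n))) / real (m * n + 1)
      \<le> real (card {c\<in>cols n (UNIV :: ('g \<Rightarrow> 'f) set). weight_window n \<delta> c})" .
  have "real (card (cols n (UNIV :: ('g \<Rightarrow> 'f) set))) = q ^ (m * n)"
    unfolding q_def m_def by (simp add: card_cols card_fun power_mult)
  also have "\<dots> = q powr real (m * n)" using q2 powr_realpow[of q "m * n"] by simp
  finally have den: "real (card (cols n (UNIV :: ('g \<Rightarrow> 'f) set))) = q powr real (m * n)" .
  have "q powr (real (m * n) * qentropy q (real t / real (m * n)) - real (m * n)) / real (m * n + 1)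
      = q powr (real (m * n) * qentropy q (real t / real (m * n))) / real (m * n + 1) / q powr real (m * n)"
    using q2 by (simp add: powr_diff)
  also have "\<dots> \<le> window_fraction n \<delta> (UNIV :: ('g \<Rightarrow> 'f) set)"
    unfolding window_fraction_def den by (intro divide_right_mono[OF count]) simp
  finally show ?thesis .
qed

lemma ENhat_ge:
  fixes \<delta> :: real
  defines "m \<equiv> CARD('g::{finite,ab_group_add})" and "q \<equiv> real CARD('f::{finite,field})"
  assumes k: "0 < k" and t: "0 < t" "t < m * n" "real t \<le> real m * real n * \<delta>"
  shows "q powr (real m * (real k - 1 - real n) + real (m * n) * qentropy q (real t / real (m * n)))
           / real (m * n + 1)
        \<le> ENhat TYPE('g \<Rightarrow> 'f) k n \<delta>"
proof -
  have q2: "2 \<le> q" unfolding q_def using two_le_card_field[where 'f='f] by linarith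
  have "q powr (real m * (real k - 1)) = real (CARD('g \<Rightarrow> 'f) ^ (k - 1))"
    using q2 k unfolding q_def m_def by (simp add: card_fun powr_realpow[symmetric] powr_powr of_nat_diff)
  also have "\<dots> \<le> real (card {b\<in>(gvecs k :: (nat \<Rightarrow> 'g \<Rightarrow> 'f) set). b 0 = gunit})"
    using card_gvecs_gunit_ge[OF k] by (rule of_nat_mono)
  finally have lower: "q powr (real m * (real k - 1))
      * (q powr (real (m * n) * qentropy q (real t / real (m * n)) - real (m * n)) / real (m * n + 1))
      \<le> ENhat TYPE('g \<Rightarrow> 'f) k n \<delta>"
    using window_fraction_UNIV_ge[OF t[unfolded m_def]]
    by (intro order_trans[OF mult_mono card_gvecs_gunit_mult_window_fraction_le[OF k]])
       (simp_all add: q_def m_def)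
  have "real m * (real k - 1 - real n) + real (m * n) * qentropy q (real t / real (m * n))
      = real m * (real k - 1) + (real (m * n) * qentropy q (real t / real (m * n)) - real (m * n))"
    by (simp add: algebra_simps)
  then show ?thesis using lower by (simp only: powr_add times_divide_eq_right)
qed

section \<open>Asymptotics\<close>

lemma nat_round_bounds:
  assumes "0 \<le> x"
  shows "x - 1/2 \<le> real (nat (round x))" "real (nat (round x)) \<le> x + 1/2"
  using of_int_round_abs_le[of x] assms by linarith+

lemma floor_mult_div_tendsto:
  fixes f :: "'a \<Rightarrow> real"
  assumes f: "filterlim f at_top F" and "0 \<le> \<delta>"
  shows "((\<lambda>x. real (nat \<lfloor>\<delta> * f x\<rfloor>) / f x) \<longlongrightarrow> \<delta>) F"
proof (rule tendsto_sandwich)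
  have pos: "\<forall>\<^sub>F x in F. 0 < f x" using f by (simp add: filterlim_at_top_dense)
  show "\<forall>\<^sub>F x in F. \<delta> - inverse (f x) \<le> real (nat \<lfloor>\<delta> * f x\<rfloor>) / f x"
    using pos
  proof eventually_elim
    case (elim x)
    have "\<delta> * f x - 1 \<le> real (nat \<lfloor>\<delta> * f x\<rfloor>)" using assms(2) elim by linarith
    then have "(\<delta> * f x - 1) / f x \<le> real (nat \<lfloor>\<delta> * f x\<rfloor>) / f x"
      using elim by (intro divide_right_mono) auto
    moreover have "(\<delta> * f x - 1) / f x = \<delta> - inverse (f x)" using elim by (simp add: field_simps)
    ultimately show ?case by simp
  qed
  show "\<forall>\<^sub>F x in F. real (nat \<lfloor>\<delta> * f x\<rfloor>) / f x \<le> \<delta>"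
    using pos by eventually_elim (use assms(2) in \<open>simp add: divide_le_eq\<close>)
  show "((\<lambda>x. \<delta> - inverse (f x)) \<longlongrightarrow> \<delta>) F"
    using tendsto_diff[OF tendsto_const tendsto_inverse_0_at_top[OF f]] by simp
qed simp

lemma qentropy_tendsto:
  assumes p: "(p \<longlongrightarrow> x) F" and x: "0 < x" "x < 1" and "1 < q"
  shows "((\<lambda>y. qentropy q (p y)) \<longlongrightarrow> qentropy q x) F"
proof -
  define h where "h y = y * log q (q - 1) - y * log q y - (1 - y) * log q (1 - y)" for y
  have "((\<lambda>y. h (p y)) \<longlongrightarrow> h x) F"
    unfolding h_def using assms by (intro tendsto_intros p) auto
  moreover have "\<forall>\<^sub>F y in F. h (p y) = qentropy q (p y)"
    using order_tendstoD(1)[OF p x(1)] order_tendstoD(2)[OF p x(2)]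
    by eventually_elim (auto simp: h_def qentropy_def)
  moreover have "h x = qentropy q x" using x unfolding h_def qentropy_def by simp
  ultimately show ?thesis using Lim_transform_eventually[of "\<lambda>y. h (p y)"] by simp
qed

lemma eventually_qentropy_floor_gt:
  assumes "y < qentropy q \<delta>" "0 < \<delta>" "\<delta> < 1" "1 < q" "0 < m"
  shows "\<forall>\<^sub>F n in sequentially. y < qentropy q (real (nat \<lfloor>\<delta> * real (m * n)\<rfloor>) / real (m * n))"
proof -
  have "filterlim (\<lambda>n. real (m * n)) at_top sequentially"
    unfolding of_nat_mult using assms(5) by real_asymp
  then have "((\<lambda>n. real (nat \<lfloor>\<delta> * real (m * n)\<rfloor>) / real (m * n)) \<longlongrightarrow> \<delta>) sequentially"
    by (rule floor_mult_div_tendsto) (use assms(2) in simp)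
  then have "((\<lambda>n. qentropy q (real (nat \<lfloor>\<delta> * real (m * n)\<rfloor>) / real (m * n))) \<longlongrightarrow> qentropy q \<delta>) sequentially"
    using assms(2-4) by (rule qentropy_tendsto)
  then show ?thesis using assms(1) by (rule order_tendstoD(1))
qed

lemma ENhat_nonneg: "0 \<le> ENhat TYPE('g::{finite,ab_group_add} \<Rightarrow> 'f::{finite,field}) k n \<delta>"
  unfolding ENhat_def by (intro divide_nonneg_nonneg sum_nonneg) auto

lemma ENhat_exponential_decay:
  fixes r \<delta> :: real
  defines "E \<equiv> \<lambda>n. ENhat TYPE('g::{finite,ab_group_add} \<Rightarrow> 'f::{finite,field}) (nat (round (r * real n))) n \<delta>"
  assumes r: "0 < r" "r < gq (real CARD('f)) \<delta>" and \<delta>: "0 < \<delta>" "\<delta> < 1 - 1 / real CARD('f)"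
  obtains a c where "0 < a" "0 < c" "\<forall>\<^sub>F n in sequentially. E n \<le> c * exp (- a * real n)"
proof -
  define H where "H = qentropy (real CARD('f)) \<delta>"
  define \<gamma> where "\<gamma> = 1 - H - r"
  define a where "a = \<gamma> * ln 2"
  define c where "c = real CARD(('g \<Rightarrow> 'f) set) * real CARD('g) * 2 powr (1/2)"
  have \<gamma>: "0 < \<gamma>" using r unfolding gq_def H_def \<gamma>_def by simp
  have bound: "E n \<le> c * exp (- a * real n)" if n: "1 / (2 * \<gamma>) \<le> real n" for n
  proof -
    have "1 \<le> 2 * \<gamma> * real n" using n \<gamma> by (simp add: divide_le_eq mult.commute)
    moreover have "real (nat (round (r * real n))) \<le> r * real n + 1/2"
      using nat_round_bounds r by simp
    ultimately have exponent: "real (nat (round (r * real n))) + real n * H - real n \<le> 1/2 - \<gamma> * real n"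
      unfolding \<gamma>_def by (simp add: algebra_simps)
    have "E n \<le> real CARD(('g \<Rightarrow> 'f) set) * real CARD('g)
        * 2 powr (real (nat (round (r * real n))) + real n * H - real n)"
      unfolding E_def H_def by (rule ENhat_le[OF \<delta>]) (use exponent \<open>1 \<le> 2 * \<gamma> * real n\<close> in \<open>simp add: H_def\<close>)
    also have "\<dots> \<le> real CARD(('g \<Rightarrow> 'f) set) * real CARD('g) * 2 powr (1/2 - \<gamma> * real n)"
      using exponent by (intro mult_left_mono powr_mono) auto
    also have "2 powr (1/2 - \<gamma> * real n) = 2 powr (1/2) * exp (- a * real n)"
      unfolding a_def by (simp add: powr_def exp_diff[symmetric] exp_add[symmetric] algebra_simps)
    finally show ?thesis unfolding c_def by (simp add: mult_ac)
  qed
  have "\<forall>\<^sub>F n in sequentially. 1 / (2 * \<gamma>) \<le> real n"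
    using filterlim_real_sequentially unfolding filterlim_at_top by blast
  then have "\<forall>\<^sub>F n in sequentially. E n \<le> c * exp (- a * real n)"
    by eventually_elim (rule bound)
  moreover have "0 < a" "0 < c" using \<gamma> unfolding a_def c_def by (simp_all add: card_gt_0_iff)
  ultimately show ?thesis using that by blast
qed

lemma ENhat_ge_floor_weight:
  fixes \<delta> :: real and n :: nat
  defines "m \<equiv> CARD('g::{finite,ab_group_add})" and "q \<equiv> real CARD('f::{finite,field})"
  defines "t \<equiv> nat \<lfloor>\<delta> * real (m * n)\<rfloor>"
  assumes k: "0 < k" and \<delta>: "1 \<le> \<delta> * real n" "\<delta> < 1"
  shows "q powr (real m * (real k - 1 - real n) + real (m * n) * qentropy q (real t / real (m * n)))
           / real (m * n + 1)
        \<le> ENhat TYPE('g \<Rightarrow> 'f) k n \<delta>"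
proof -
  have "real n \<le> real (m * n)" unfolding m_def by (intro of_nat_mono) simp
  moreover have "0 < \<delta>"
  proof (rule ccontr)
    assume "\<not> 0 < \<delta>"
    then have "\<delta> * real n \<le> 0" by (simp add: mult_nonpos_nonneg)
    then show False using \<delta>(1) by linarith
  qed
  ultimately have "1 \<le> \<delta> * real (m * n)"
    using \<delta>(1) mult_left_mono[of "real n" "real (m * n)" \<delta>] by linarith
  then have t0: "0 < t" unfolding t_def by linarith
  have t_le: "real t \<le> \<delta> * real (m * n)" unfolding t_def using \<open>0 < \<delta>\<close> by simp
  have "0 < real (m * n)" using t0 t_le \<open>0 < \<delta>\<close> by (cases "m * n = 0") auto
  then have "\<delta> * real (m * n) < 1 * real (m * n)" by (rule mult_strict_right_mono[OF \<delta>(2)])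
  then have "real t < real (m * n)" using t_le by linarith
  then have "t < m * n" by (simp only: of_nat_less_iff)
  then show ?thesis
    using ENhat_ge[OF k t0, of n \<delta>] t_le unfolding m_def q_def by (simp add: mult_ac)
qed

lemma ENhat_exponential_growth:
  fixes r \<delta> :: real
  defines "E \<equiv> \<lambda>n. ENhat TYPE('g::{finite,ab_group_add} \<Rightarrow> 'f::{finite,field}) (nat (round (r * real n))) n \<delta>"
  assumes r: "0 < r" "gq (real CARD('f)) \<delta> < r" and \<delta>: "0 < \<delta>" "\<delta> < 1 - 1 / real CARD('f)"
  obtains a c where "0 < a" "0 < c" "\<forall>\<^sub>F n in sequentially. c * exp (a * real n) \<le> E n"
proof -
  define m where "m = CARD('g)"
  define q where "q = real CARD('f)"
  define H where "H = qentropy q \<delta>"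
  define \<gamma> where "\<gamma> = r - 1 + H"
  define k where "k n = nat (round (r * real n))" for n
  define t where "t n = nat \<lfloor>\<delta> * real (m * n)\<rfloor>" for n
  define \<epsilon> where "\<epsilon> = real m * \<gamma> * ln q / 4"
  define a where "a = real m * \<gamma> * ln q / 2"
  define c where "c = exp (- (3/2) * real m * ln q)"
  have q2: "2 \<le> q" unfolding q_def using two_le_card_field[where 'f='f] by linarith
  have m: "0 < m" unfolding m_def by simp
  have \<gamma>: "0 < \<gamma>" using r unfolding gq_def q_def H_def \<gamma>_def by simp
  have \<delta>1: "\<delta> < 1" using \<delta>(2) q2 unfolding q_def[symmetric] by (smt (verit) divide_pos_pos)
  have ev_r: "\<forall>\<^sub>F n in sequentially. 3 \<le> 2 * r * real n" using r by real_asymp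
  have ev_\<delta>: "\<forall>\<^sub>F n in sequentially. 1 \<le> \<delta> * real n" using \<delta> by real_asymp
  have ev_h: "\<forall>\<^sub>F n in sequentially. H - \<gamma> / 4 < qentropy q (real (t n) / real (m * n))"
    unfolding t_def H_def using \<gamma> \<delta>(1) \<delta>1 q2 m by (intro eventually_qentropy_floor_gt) auto
  have ev_exp: "\<forall>\<^sub>F n in sequentially. real m * real n + 1 \<le> exp (\<epsilon> * real n)"
    using \<gamma> q2 m unfolding \<epsilon>_def by real_asymp
  have "\<forall>\<^sub>F n in sequentially. c * exp (a * real n) \<le> E n"
    using ev_r ev_\<delta> ev_h ev_exp
  proof eventually_elim
    case (elim n)
    note h = elim(3) and exp_bound = elim(4)
    have k1: "1 \<le> real (k n)" and k_lower: "r * real n - 1/2 \<le> real (k n)"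
      using nat_round_bounds[of "r * real n"] r elim(1) unfolding k_def by auto
    have E_ge: "q powr (real m * (real (k n) - 1 - real n) + real (m * n) * qentropy q (real (t n) / real (m * n)))
        / real (m * n + 1) \<le> E n"
      using ENhat_ge_floor_weight[of "k n" \<delta> n, where 'g='g and 'f='f] k1 elim(2) \<delta>1
      unfolding E_def k_def t_def m_def q_def by simp
    define X where "X = real m * (real (k n) - 1 - real n) + real (m * n) * qentropy q (real (t n) / real (m * n))"
    have "real m * (r * real n - 3/2 - real n) \<le> real m * (real (k n) - 1 - real n)"
      using k_lower by (intro mult_left_mono) auto
    moreover have "real m * real n * (H - \<gamma> / 4) \<le> real (m * n) * qentropy q (real (t n) / real (m * n))"
      using mult_left_mono[OF less_imp_le[OF h], of "real m * real n"] by simp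
    ultimately have "real m * (r * real n - 3/2 - real n) + real m * real n * (H - \<gamma> / 4) \<le> X"
      unfolding X_def by linarith
    moreover have "real m * (r * real n - 3/2 - real n) + real m * real n * (H - \<gamma> / 4)
        = real m * real n * (3 * \<gamma> / 4) - 3/2 * real m"
      unfolding \<gamma>_def by (simp add: field_simps)
    ultimately have X: "(real m * real n * (3 * \<gamma> / 4) - 3/2 * real m) * ln q \<le> X * ln q"
      using q2 by (intro mult_right_mono) auto
    have "c * exp (a * real n) = exp ((real m * real n * (3 * \<gamma> / 4) - 3/2 * real m) * ln q) / exp (\<epsilon> * real n)"
      unfolding c_def a_def \<epsilon>_def by (simp add: exp_add[symmetric] exp_diff[symmetric] field_simps)
    also have "\<dots> \<le> exp (X * ln q) / real (m * n + 1)"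
      using X exp_bound by (intro frac_le) (auto simp: add_pos_nonneg)
    also have "\<dots> = q powr X / real (m * n + 1)" using q2 by (simp add: powr_def mult.commute)
    also have "\<dots> \<le> E n" using E_ge unfolding X_def .
    finally show ?case .
  qed
  moreover have "0 < a" "0 < c" using \<gamma> q2 m unfolding a_def c_def by simp_all
  ultimately show ?thesis using that by blast
qed

theorem theorem4p1:
  fixes r \<delta> :: real
  assumes "0 < r" "r < 1" "0 < \<delta>" "\<delta> < 1 - 1 / real CARD('f::{finite,field})"
  defines "E \<equiv> (\<lambda>n::nat. ENhat TYPE('g::{finite,ab_group_add} \<Rightarrow> 'f) (nat (round (r * real n))) n \<delta>)"
  shows "(r < gq (real CARD('f)) \<delta> \<longrightarrow>
            (E \<longlonglongrightarrow> 0) \<and> (\<exists>a>0. \<exists>c>0. \<forall>\<^sub>F n in sequentially. E n \<le> c * exp (- a * real n)))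
       \<and> (r > gq (real CARD('f)) \<delta> \<longrightarrow>
            filterlim E at_top sequentially \<and> (\<exists>a>0. \<exists>c>0. \<forall>\<^sub>F n in sequentially. E n \<ge> c * exp (a * real n)))"
proof (rule conjI; rule impI)
  assume "r < gq (real CARD('f)) \<delta>"
  then obtain a c where ac: "0 < a" "0 < c" and bound: "\<forall>\<^sub>F n in sequentially. E n \<le> c * exp (- a * real n)"
    unfolding E_def by (rule ENhat_exponential_decay[OF assms(1) _ assms(3,4)])
  have lim: "(\<lambda>n. c * exp (- a * real n)) \<longlonglongrightarrow> 0" using ac by real_asymp
  have nonneg: "\<forall>\<^sub>F n in sequentially. 0 \<le> E n" unfolding E_def by (simp add: ENhat_nonneg)
  have "E \<longlonglongrightarrow> 0" by (rule tendsto_sandwich[OF nonneg bound tendsto_const lim])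
  then show "(E \<longlonglongrightarrow> 0) \<and> (\<exists>a>0. \<exists>c>0. \<forall>\<^sub>F n in sequentially. E n \<le> c * exp (- a * real n))"
    using ac bound by blast
next
  assume "gq (real CARD('f)) \<delta> < r"
  then obtain a c where ac: "0 < a" "0 < c" and bound: "\<forall>\<^sub>F n in sequentially. c * exp (a * real n) \<le> E n"
    unfolding E_def by (rule ENhat_exponential_growth[OF assms(1) _ assms(3,4)])
  have "filterlim (\<lambda>n. c * exp (a * real n)) at_top sequentially" using ac by real_asymp
  then have "filterlim E at_top sequentially" by (rule filterlim_at_top_mono[OF _ bound])
  then show "filterlim E at_top sequentially \<and> (\<exists>a>0. \<exists>c>0. \<forall>\<^sub>F n in sequentially. E n \<ge> c * exp (a * real n))"
    using ac bound by blast
qed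

end
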